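(* Let $q\in\mathbb C$ with $|q-1|>1$, let $\rho=1/|1-q|$, and let $\mathcal C_q=\{v/(q+v): v\in[-1,0]\}$. Then a complex number $t$ has the property that, for every $s\in D(\rho)$, $1+(q-1)ts\neq0$ and $t\|_q s\in D(\rho)$, if and only if $t\in\mathcal C_q$. In particular $\{t\|_q s: t\in\mathcal C_q, s\in D(\rho)\}\subseteq D(\rho)$, and $\mathcal C_q$ is the largest subset of $\mathbb C$ with this property.
   Context: $D(r)=\{t\in\mathbb C:|t|\le r\}$. For $t,s\in\mathbb C$ with $1+(q-1)ts\neq0$, $t\|_q s=\dfrac{t+s+(q-2)ts}{1+(q-1)ts}$ (the parallel connection of transmissivities). Note $q+v\ne0$ for $v\in[-1,0]$ since $|q-1|>1$. *)

theory Defs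
  imports Complex_Main
begin

definition disc :: "real \<Rightarrow> complex set" where
  "disc r = {t. cmod t \<le> r}"

text \<open>Parallel connection of transmissivities (only meaningful when the denominator is nonzero).\<close>
definition par :: "complex \<Rightarrow> complex \<Rightarrow> complex \<Rightarrow> complex" where
  "par q t s = (t + s + (q - 2) * t * s) / (1 + (q - 1) * t * s)"

definition Cq :: "complex \<Rightarrow> complex set" where
  "Cq q = {complex_of_real v / (q + complex_of_real v) | v. v \<in> {-1..0}}"

end

theory Submission
  imports Defs
begin

text \<open>
  Put \<open>p = q - 1\<close>, write \<open>t = v/(q + v)\<close> and rescale \<open>S = p s\<close>, so that \<open>D(\<rho>)\<close> becomes the unit
  disc. Then \<open>p (t \<parallel>\<^sub>q s)\<close> is the Moebius map \<open>S \<mapsto> ((1 + p u) S + p (u - 1)) / ((u - 1) S + p + u)\<close>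
  with \<open>u = v + 1\<close>, and the question is for which \<open>u\<close> this map sends the closed unit disc into itself.
  For real \<open>u\<close> the difference of the squared moduli of denominator and numerator is
  \<open>u ((1 - |S|\<^sup>2) |1 + p|\<^sup>2 + (1 - u) (|p|\<^sup>2 - 1) |1 + S|\<^sup>2)\<close>, which is nonnegative for \<open>u \<in> [0, 1]\<close>.
  Conversely, on the unit circle near \<open>S = -1\<close>, where numerator and denominator always have
  equal modulus, the first-order term of this difference forces \<open>Im u = 0\<close>, and \<open>S = 1\<close> then
  forces \<open>0 \<le> u \<le> 1\<close>.
\<close>

definition mobius_num :: "complex \<Rightarrow> complex \<Rightarrow> complex \<Rightarrow> complex" where
  "mobius_num p u S = (1 + p * u) * S + p * (u - 1)"

definition mobius_den :: "complex \<Rightarrow> complex \<Rightarrow> complex \<Rightarrow> complex" where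
  "mobius_den p u S = (u - 1) * S + (p + u)"

definition mobius_maps_unit_disc :: "complex \<Rightarrow> complex \<Rightarrow> bool" where
  "mobius_maps_unit_disc p u \<longleftrightarrow>
     (\<forall>S. cmod S \<le> 1 \<longrightarrow> mobius_den p u S \<noteq> 0 \<and> cmod (mobius_num p u S) \<le> cmod (mobius_den p u S))"

definition par_stable :: "complex \<Rightarrow> complex \<Rightarrow> bool" where
  "par_stable q t \<longleftrightarrow>
     (\<forall>s\<in>disc (1 / cmod (q - 1)). 1 + (q - 1) * t * s \<noteq> 0 \<and> par q t s \<in> disc (1 / cmod (q - 1)))"

lemma norm_mobius_den_sq_minus_num_sq_real:
  fixes p S :: complex and u :: real
  shows "(cmod (mobius_den p u S))\<^sup>2 - (cmod (mobius_num p u S))\<^sup>2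
    = u * ((1 - (cmod S)\<^sup>2) * (cmod (1 + p))\<^sup>2 + (1 - u) * ((cmod p)\<^sup>2 - 1) * (cmod (1 + S))\<^sup>2)"
  unfolding mobius_num_def mobius_den_def
  by (cases p; cases S) (simp only: cmod_power2; simp add: power2_eq_square algebra_simps)

lemma mobius_den_nonzero:
  fixes p S :: complex and u :: real
  assumes "cmod p > 1" "0 \<le> u" "u \<le> 1" "cmod S \<le> 1"
  shows "mobius_den p u S \<noteq> 0"
proof -
  have "cmod (of_real u - 1 :: complex) = 1 - u"
    using assms(3)
    by (metis abs_of_nonneg diff_ge_0_iff_ge norm_minus_commute norm_of_real of_real_1 of_real_diff)
  then have "cmod ((of_real u - 1) * S) = (1 - u) * cmod S"
    by (simp add: norm_mult)
  also have "\<dots> \<le> 1 - u"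
    using assms by (simp add: mult_left_le)
  finally have "cmod ((of_real u - 1) * S) \<le> 1 - u" .
  moreover have "cmod p - u \<le> cmod (p + of_real u)"
    using norm_triangle_sub[of p "p + of_real u"] assms(2) by simp
  moreover have "cmod (p + of_real u) - cmod ((of_real u - 1) * S) \<le> cmod (mobius_den p u S)"
    using norm_diff_ineq[of "p + of_real u" "(of_real u - 1) * S"]
    by (simp add: mobius_den_def add.commute)
  ultimately have "cmod (mobius_den p u S) > 0"
    using assms(1) by linarith
  then show ?thesis by auto
qed

lemma mobius_maps_unit_disc_of_real:
  fixes p :: complex and u :: real
  assumes p: "cmod p > 1" and u: "0 \<le> u" "u \<le> 1"
  shows "mobius_maps_unit_disc p u"
  unfolding mobius_maps_unit_disc_def
proof (intro allI impI conjI)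
  fix S :: complex
  assume S: "cmod S \<le> 1"
  show "mobius_den p u S \<noteq> 0"
    using mobius_den_nonzero[OF p u S] .
  have "(cmod S)\<^sup>2 \<le> 1" "(cmod p)\<^sup>2 > 1"
    using S p by (simp_all add: power_le_one one_less_power)
  then have "0 \<le> (1 - (cmod S)\<^sup>2) * (cmod (1 + p))\<^sup>2 + (1 - u) * ((cmod p)\<^sup>2 - 1) * (cmod (1 + S))\<^sup>2"
    using u by simp
  then have "0 \<le> (cmod (mobius_den p u S))\<^sup>2 - (cmod (mobius_num p u S))\<^sup>2"
    unfolding norm_mobius_den_sq_minus_num_sq_real using u(1) by simp
  then have "(cmod (mobius_num p u S))\<^sup>2 \<le> (cmod (mobius_den p u S))\<^sup>2"
    by simp
  then show "cmod (mobius_num p u S) \<le> cmod (mobius_den p u S)"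
    by (rule power2_le_imp_le) simp
qed

lemma norm_mobius_den_sq_minus_num_sq_unit_circle:
  fixes p :: complex and c d x y :: real
  assumes "c\<^sup>2 + d\<^sup>2 = 1"
  shows "(cmod (mobius_den p (Complex x y) (Complex c d)))\<^sup>2 - (cmod (mobius_num p (Complex x y) (Complex c d)))\<^sup>2
    = 2 * ((1 + c) * (((cmod p)\<^sup>2 - 1) * (x - x\<^sup>2 - y\<^sup>2) + 2 * y * Im p) - d * (y * (cmod (1 + p))\<^sup>2))"
proof -
  obtain a b where p: "p = Complex a b"
    by (cases p)
  have "d * d = 1 - c * c"
    using assms by (simp add: power2_eq_square)
  then show ?thesis
    unfolding mobius_num_def mobius_den_def p cmod_power2
    by (simp add: power2_eq_square) algebra
qed

lemma unit_circle_form_nonneg_imp_zero: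
  fixes R I :: real
  assumes "\<And>c d. c\<^sup>2 + d\<^sup>2 = 1 \<Longrightarrow> 0 \<le> (1 + c) * R - d * I"
  shows "I = 0"
proof (rule ccontr)
  assume "I \<noteq> 0"
  define k where "k = (\<bar>R\<bar> + 1) / I"
  have k: "1 + k\<^sup>2 > 0"
    by (simp add: add_pos_nonneg)
  \<comment> \<open>rational parametrisation of the unit circle by the slope \<open>k\<close>\<close>
  have "((1 - k\<^sup>2) / (1 + k\<^sup>2))\<^sup>2 + (2 * k / (1 + k\<^sup>2))\<^sup>2 = 1"
    using k by (simp add: divide_simps) (simp add: power2_eq_square algebra_simps)
  from assms[OF this] have "0 \<le> (1 + (1 - k\<^sup>2) / (1 + k\<^sup>2)) * R - 2 * k / (1 + k\<^sup>2) * I" .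
  also have "\<dots> = 2 * (R - k * I) / (1 + k\<^sup>2)"
    using k by (simp add: divide_simps)
  finally have "0 \<le> R - k * I"
    using k by (simp add: zero_le_divide_iff)
  moreover have "k * I = \<bar>R\<bar> + 1"
    using \<open>I \<noteq> 0\<close> by (simp add: k_def)
  ultimately show False
    by linarith
qed

lemma mobius_maps_unit_disc_imp_real:
  fixes p u :: complex
  assumes p: "cmod p > 1" and maps: "mobius_maps_unit_disc p u"
  shows "Im u = 0 \<and> 0 \<le> Re u \<and> Re u \<le> 1"
proof -
  obtain x y where u: "u = Complex x y"
    by (cases u)
  define R where "R = ((cmod p)\<^sup>2 - 1) * (x - x\<^sup>2 - y\<^sup>2) + 2 * y * Im p"
  have form_nonneg: "0 \<le> (1 + c) * R - d * (y * (cmod (1 + p))\<^sup>2)" if "c\<^sup>2 + d\<^sup>2 = 1" for c d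
  proof -
    have "cmod (Complex c d) \<le> 1"
      using that by (simp add: cmod_def)
    then have "0 \<le> (cmod (mobius_den p u (Complex c d)))\<^sup>2 - (cmod (mobius_num p u (Complex c d)))\<^sup>2"
      using maps by (simp add: mobius_maps_unit_disc_def power_mono)
    then show ?thesis
      unfolding u norm_mobius_den_sq_minus_num_sq_unit_circle[OF that] R_def by simp
  qed
  have "1 + p \<noteq> 0"
    using p by (auto simp: add_eq_0_iff)
  then have y: "y = 0"
    using unit_circle_form_nonneg_imp_zero[OF form_nonneg] by simp
  have "0 \<le> R"
    using form_nonneg[of 1 0] by simp
  moreover have "(cmod p)\<^sup>2 > 1"
    using p by (simp add: one_less_power)
  ultimately have "0 \<le> x * (1 - x)"
    by (simp add: R_def y power2_eq_square right_diff_distrib zero_le_mult_iff)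
  then show ?thesis
    by (auto simp: u y zero_le_mult_iff)
qed

lemma par_denominator_eq:
  fixes q v t s :: complex
  assumes "(q + v) * t = v"
  shows "(q + v) * (1 + (q - 1) * t * s) = mobius_den (q - 1) (v + 1) ((q - 1) * s)"
proof -
  have "(q + v) * (1 + (q - 1) * t * s) = q + v + (q - 1) * ((q + v) * t) * s"
    by (simp add: algebra_simps)
  then show ?thesis
    unfolding assms mobius_den_def by (simp add: algebra_simps)
qed

lemma par_numerator_eq:
  fixes q v t s :: complex
  assumes "(q + v) * t = v"
  shows "(q - 1) * (q + v) * (t + s + (q - 2) * t * s) = mobius_num (q - 1) (v + 1) ((q - 1) * s)"
proof -
  have "(q - 1) * (q + v) * (t + s + (q - 2) * t * s)
      = (q - 1) * ((q + v) * t + (q + v) * s + (q - 2) * ((q + v) * t) * s)"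
    by (simp add: algebra_simps)
  then show ?thesis
    unfolding assms mobius_num_def by (simp add: algebra_simps)
qed

lemma par_in_disc_iff_mobius:
  fixes q v s :: complex
  defines "t \<equiv> v / (q + v)" and "S \<equiv> (q - 1) * s"
  assumes q: "q \<noteq> 1" and qv: "q + v \<noteq> 0"
  shows "(1 + (q - 1) * t * s \<noteq> 0 \<and> par q t s \<in> disc (1 / cmod (q - 1)))
     \<longleftrightarrow> (mobius_den (q - 1) (v + 1) S \<noteq> 0
          \<and> cmod (mobius_num (q - 1) (v + 1) S) \<le> cmod (mobius_den (q - 1) (v + 1) S))"
proof -
  define N where "N = mobius_num (q - 1) (v + 1) S"
  define D where "D = mobius_den (q - 1) (v + 1) S"
  have "(q + v) * t = v"
    using qv by (simp add: t_def)
  note den = par_denominator_eq[OF this, of s, folded S_def, folded D_def]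
    and num = par_numerator_eq[OF this, of s, folded S_def, folded N_def]
  have "cmod (par q t s) \<le> 1 / cmod (q - 1) \<longleftrightarrow> cmod N \<le> cmod D" if "D \<noteq> 0"
  proof -
    have "N / ((q - 1) * D)
        = ((q - 1) * (q + v) * (t + s + (q - 2) * t * s)) / ((q - 1) * ((q + v) * (1 + (q - 1) * t * s)))"
      by (simp only: num den)
    also have "\<dots> = par q t s"
      using q qv by (simp add: par_def mult.assoc)
    finally have "par q t s = N / ((q - 1) * D)" ..
    then have "cmod (par q t s) = cmod N / (cmod (q - 1) * cmod D)"
      by (simp add: norm_mult norm_divide)
    moreover have "cmod (q - 1) > 0" "cmod D > 0"
      using q that by auto
    ultimately show ?thesis
      by (simp add: divide_le_eq le_divide_eq)
  qed
  moreover have "1 + (q - 1) * t * s \<noteq> 0 \<longleftrightarrow> D \<noteq> 0"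
    using den qv by auto
  ultimately show ?thesis
    unfolding N_def D_def disc_def by blast
qed

lemma par_stable_iff_mobius_maps_unit_disc:
  fixes q v :: complex
  assumes q: "q \<noteq> 1" and qv: "q + v \<noteq> 0"
  shows "par_stable q (v / (q + v)) \<longleftrightarrow> mobius_maps_unit_disc (q - 1) (v + 1)"
proof -
  have disc_iff: "s \<in> disc (1 / cmod (q - 1)) \<longleftrightarrow> cmod ((q - 1) * s) \<le> 1" for s
    using q unfolding disc_def norm_mult by (simp add: le_divide_eq mult.commute)
  have rescale: "(\<forall>s. cmod ((q - 1) * s) \<le> 1 \<longrightarrow> P ((q - 1) * s)) \<longleftrightarrow> (\<forall>S. cmod S \<le> 1 \<longrightarrow> P S)"
    for P :: "complex \<Rightarrow> bool"
  proof (intro iffI allI impI)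
    fix S :: complex
    assume "\<forall>s. cmod ((q - 1) * s) \<le> 1 \<longrightarrow> P ((q - 1) * s)" and "cmod S \<le> 1"
    moreover have "(q - 1) * (S / (q - 1)) = S"
      using q by simp
    ultimately show "P S"
      by metis
  qed simp
  have "par_stable q (v / (q + v))
      \<longleftrightarrow> (\<forall>s. cmod ((q - 1) * s) \<le> 1 \<longrightarrow> 1 + (q - 1) * (v / (q + v)) * s \<noteq> 0
                    \<and> par q (v / (q + v)) s \<in> disc (1 / cmod (q - 1)))"
    unfolding par_stable_def Ball_def disc_iff[symmetric] ..
  also have "\<dots> \<longleftrightarrow> mobius_maps_unit_disc (q - 1) (v + 1)"
    unfolding par_in_disc_iff_mobius[OF q qv] mobius_maps_unit_disc_def by (rule rescale)
  finally show ?thesis .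
qed

lemma par_stable_iff_Cq:
  fixes q t :: complex
  assumes q: "cmod (q - 1) > 1"
  shows "par_stable q t \<longleftrightarrow> t \<in> Cq q"
proof
  assume "t \<in> Cq q"
  then obtain v :: real where v: "-1 \<le> v" "v \<le> 0" and t: "t = v / (q + v)"
    unfolding Cq_def by auto
  have "mobius_maps_unit_disc (q - 1) (of_real (v + 1))"
    using mobius_maps_unit_disc_of_real[OF q, of "v + 1"] v by simp
  moreover have "q + v \<noteq> 0"
    using mobius_den_nonzero[OF q, of "v + 1" 0] v by (simp add: mobius_den_def)
  moreover have "q \<noteq> 1"
    using q by auto
  ultimately show "par_stable q t"
    using par_stable_iff_mobius_maps_unit_disc[of q v] by (simp add: t)
next
  assume stable: "par_stable q t"
  have "q \<noteq> 1" "q \<noteq> 0"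
    using q by auto
  \<comment> \<open>\<open>s = -1/(q - 1)\<close> lies on the boundary of the disc and excludes \<open>t = 1\<close>\<close>
  have "- 1 / (q - 1) \<in> disc (1 / cmod (q - 1))"
    by (simp add: disc_def norm_divide)
  then have "1 + (q - 1) * t * (- 1 / (q - 1)) \<noteq> 0"
    using stable unfolding par_stable_def by blast
  then have "1 - t \<noteq> 0"
    using \<open>q \<noteq> 1\<close> by simp
  define v where "v = q * t / (1 - t)"
  have qv_eq: "q + v = q / (1 - t)"
    using \<open>1 - t \<noteq> 0\<close> by (simp add: v_def field_simps)
  then have qv: "q + v \<noteq> 0"
    using \<open>1 - t \<noteq> 0\<close> \<open>q \<noteq> 0\<close> by simp
  have t: "t = v / (q + v)"
    unfolding qv_eq using \<open>1 - t \<noteq> 0\<close> \<open>q \<noteq> 0\<close> by (simp add: v_def)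
  have "mobius_maps_unit_disc (q - 1) (v + 1)"
    using stable par_stable_iff_mobius_maps_unit_disc[OF \<open>q \<noteq> 1\<close> qv] by (simp flip: t)
  from mobius_maps_unit_disc_imp_real[OF q this]
  have "Im v = 0" "-1 \<le> Re v" "Re v \<le> 0"
    by simp_all
  then have "t = complex_of_real (Re v) / (q + complex_of_real (Re v)) \<and> Re v \<in> {-1..0}"
    by (simp add: t complex_is_Real_iff)
  then show "t \<in> Cq q"
    unfolding Cq_def by blast
qed

theorem lemma7p3:
  fixes q :: complex
  assumes "cmod (q - 1) > 1"
  defines "\<rho> \<equiv> 1 / cmod (1 - q)"
  shows "(\<forall>t. (\<forall>s\<in>disc \<rho>. 1 + (q - 1) * t * s \<noteq> 0 \<and> par q t s \<in> disc \<rho>) \<longleftrightarrow> t \<in> Cq q)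
         \<and> {par q t s | t s. t \<in> Cq q \<and> s \<in> disc \<rho>} \<subseteq> disc \<rho>
         \<and> (\<forall>S. (\<forall>t\<in>S. \<forall>s\<in>disc \<rho>. 1 + (q - 1) * t * s \<noteq> 0 \<and> par q t s \<in> disc \<rho>)
                 \<longrightarrow> S \<subseteq> Cq q)"
proof -
  have "\<rho> = 1 / cmod (q - 1)"
    by (simp add: \<rho>_def norm_minus_commute)
  then have "(\<forall>s\<in>disc \<rho>. 1 + (q - 1) * t * s \<noteq> 0 \<and> par q t s \<in> disc \<rho>) \<longleftrightarrow> t \<in> Cq q" for t
    using par_stable_iff_Cq[OF assms(1)] by (simp add: par_stable_def)
  then show ?thesis
    by blast
qed

end
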